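(* Suppose that $$\sum_{y\in\mathbb Z^d}P\big[A_{1,0,y}\ln A_{1,0,y}\big]>|a|\ln|a|$$ (with the convention $0\ln0=0$). Then there exists a nonrandom constant $c>0$ such that, almost surely, $|\bar N_t|=O(e^{-ct})$ as $t\to\infty$.
   Context: Let $d\ge1$. For $x\in\mathbb R^d$, $|x|=\sum_i|x_i|$; for $\xi\in\mathbb R^{\mathbb Z^d}$, $|\xi|=\sum_{x}|\xi_x|$. Let $A_t=(A_{t,x,y})_{x,y\in\mathbb Z^d}$, $t=1,2,\dots$, be i.i.d. random matrices on a probability space $(\Omega,\mathcal F,P)$ ($P[X]$ denotes expectation) such that: (i) $A_{1,x,y}\ge0$; (ii) the columns $\{A_{1,\cdot,y}\}_{y\in\mathbb Z^d}$ are independent; (iii) $P[A_{1,x,y}^2]<\infty$ for all $x,y$; (iv) there is a nonrandom $r_A\in\mathbb N$ with $A_{1,x,y}=0$ a.s. if $|x-y|>r_A$; (v) $(A_{1,x+z,y+z})_{x,y}$ has the same law as $A_1$ for every $z\in\mathbb Z^d$; (vi) with $a_y=P[A_{1,0,y}]$, the set $\{x:\sum_y a_{x+y}a_y\neq0\}$ contains a linear basis of $\mathbb R^d$. Put $|a|=\sum_y a_y$. Given a nonrandom $N_0\in[0,\infty)^{\mathbb Z^d}$ with $\{x:N_{0,x}>0\}$ finite and nonempty, define $N_{t,y}=\sum_xN_{t-1,x}A_{t,x,y}$ ($t\ge1$), $\bar N_{t,x}=|a|^{-t}N_{t,x}$ and $|\bar N_t|=\sum_x\bar N_{t,x}$.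 *)

theory Defs
  imports "HOL-Probability.Probability" "HOL-Library.Landau_Symbols"
begin

text \<open>Sites of the lattice Z^d are modelled as int^'d for a finite index type 'd
  (so d = CARD('d) >= 1).\<close>

definition l1norm :: "int ^ 'd::finite \<Rightarrow> int" where
  "l1norm x = (\<Sum>i\<in>UNIV. \<bar>x $ i\<bar>)"

definition embR :: "int ^ 'd::finite \<Rightarrow> real ^ 'd" where
  "embR x = (\<chi> i. real_of_int (x $ i))"

definition matM :: "(int ^ 'd::finite \<Rightarrow> int ^ 'd \<Rightarrow> real) measure" where
  "matM = PiM UNIV (\<lambda>_. PiM UNIV (\<lambda>_. borel))"

definition colM :: "(int ^ 'd::finite \<Rightarrow> real) measure" where
  "colM = PiM UNIV (\<lambda>_. borel)"

fun pop :: "(int ^ 'd::finite \<Rightarrow> real) \<Rightarrow> (nat \<Rightarrow> 'w \<Rightarrow> int ^ 'd \<Rightarrow> int ^ 'd \<Rightarrow> real)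
            \<Rightarrow> nat \<Rightarrow> 'w \<Rightarrow> int ^ 'd \<Rightarrow> real" where
  "pop N0 A 0 \<omega> = N0"
| "pop N0 A (Suc t) \<omega> = (\<lambda>y. infsum (\<lambda>x. pop N0 A t \<omega> x * A (Suc t) \<omega> x y) UNIV)"

end

theory Submission
  imports Defs
begin

text \<open>
  Proof by the fractional moment method.  For 0 < th < 1 let
  Phi_t = sum_x N_{t,x}^th.  Because the matrices have range r_A, N_t lives on the
  finite set of sites within distance t r_A of the support of N_0, so the infinite
  sums defining N_t can be replaced by a finite recursion (pop_fin).  Subadditivity
  of u |-> u^th, independence of A_{t+1} from the past and shift invariance give
  E Phi_{t+1} <= K(th) E Phi_t with K(th) = sum_z E A_{1,0,z}^th (moment_factor).
  Since (x - x^(1-e))/e tends to x ln x as e -> 0, the entropy hypothesis forces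
  K(th) < |a|^th for some th < 1.  Markov's inequality and Borel-Cantelli then give
  Phi_t < b^t for all large t, almost surely, for any K(th) < b < |a|^th, and
  |N_t|^th <= Phi_t yields |N_t| / |a|^t <= (b / |a|^th)^(t/th).
\<close>

subsection \<open>Elementary inequalities for fractional powers\<close>

lemma powr_add_le:
  fixes a b th :: real
  assumes "a \<ge> 0" "b \<ge> 0" "0 < th" "th \<le> 1"
  shows "(a + b) powr th \<le> a powr th + b powr th"
proof (cases "a + b = 0")
  case True then show ?thesis using assms by simp
next
  case False
  then have s: "a + b > 0" using assms by simp
  have ha: "a / (a+b) \<le> (a/(a+b)) powr th"
    using powr_mono'[of th 1 "a/(a+b)"] assms s by (simp add: divide_le_eq_1)
  have hb: "b / (a+b) \<le> (b/(a+b)) powr th"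
    using powr_mono'[of th 1 "b/(a+b)"] assms s by (simp add: divide_le_eq_1)
  have "1 = a/(a+b) + b/(a+b)" using s by (simp add: add_divide_distrib[symmetric])
  also have "\<dots> \<le> (a/(a+b)) powr th + (b/(a+b)) powr th" using ha hb by simp
  also have "\<dots> = (a powr th + b powr th) / (a+b) powr th"
    using assms s by (simp add: powr_divide add_divide_distrib)
  finally have "1 \<le> (a powr th + b powr th) / (a+b) powr th" .
  then show ?thesis using s by (simp add: le_divide_eq)
qed

lemma powr_sum_le:
  fixes f :: "'a \<Rightarrow> real"
  assumes "finite S" "\<And>x. x \<in> S \<Longrightarrow> f x \<ge> 0" "0 < th" "th \<le> 1"
  shows "(\<Sum>x\<in>S. f x) powr th \<le> (\<Sum>x\<in>S. f x powr th)"
  using assms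
proof (induction S rule: finite_induct)
  case empty then show ?case by simp
next
  case (insert x F)
  have "(\<Sum>x\<in>insert x F. f x) powr th = (f x + (\<Sum>x\<in>F. f x)) powr th" using insert by simp
  also have "\<dots> \<le> f x powr th + (\<Sum>x\<in>F. f x) powr th"
    by (rule powr_add_le) (use insert in \<open>auto intro: sum_nonneg\<close>)
  also have "\<dots> \<le> f x powr th + (\<Sum>x\<in>F. f x powr th)" using insert by simp
  finally show ?case using insert by simp
qed

text \<open>A crude bound making fractional powers of square-integrable variables integrable.\<close>
lemma powr_le_one_plus_sq:
  fixes x th :: real assumes "x \<ge> 0" "0 < th" "th \<le> 1"
  shows "x powr th \<le> 1 + x\<^sup>2"
proof (cases "x \<le> 1")
  case True
  then have "x powr th \<le> 1 powr th" using assms by (intro powr_mono2) auto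
  then have "x powr th \<le> 1" by simp
  then show ?thesis using zero_le_power2[of x] by linarith
next
  case False
  then have "x powr th \<le> x powr 1" using assms by (intro powr_mono) auto
  also have "\<dots> \<le> x\<^sup>2" using False by (simp add: power2_eq_square)
  finally show ?thesis by simp
qed

text \<open>The left difference quotient of th |-> x powr th at th = 1.  As e -> 0 it
  converges to x ln x, and it stays between -2 and x ln x.\<close>
definition powr_quot :: "real \<Rightarrow> real \<Rightarrow> real" where
  "powr_quot e x = (x - x powr (1 - e)) / e"

lemma powr_quot_le_xlnx:
  fixes x e :: real assumes "x \<ge> 0" "0 < e"
  shows "powr_quot e x \<le> x * ln x"
proof (cases "x = 0")
  case True then show ?thesis by (simp add: powr_quot_def)
next
  case False
  then have x: "x > 0" using assms by simp
  have "x powr (1 - e) = exp (ln x + (- e * ln x))"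
    using x by (simp add: powr_def algebra_simps)
  also have "\<dots> = x * exp (- e * ln x)" using x by (simp only: exp_add exp_ln)
  also have "\<dots> \<ge> x * (1 - e * ln x)"
    using x exp_ge_add_one_self[of "- e * ln x"] by (intro mult_left_mono) auto
  finally have "x - x powr (1 - e) \<le> e * (x * ln x)" by (simp add: algebra_simps)
  then show ?thesis using assms by (simp add: powr_quot_def divide_le_eq mult.commute)
qed

lemma exp_minus_one_le: "exp u - 1 \<le> u * exp u" for u :: real
proof -
  have "(1 - u) * exp u \<le> exp (- u) * exp u"
    using exp_ge_add_one_self[of "- u"] by (intro mult_right_mono) auto
  also have "\<dots> = 1" by (simp add: exp_add[symmetric])
  finally show ?thesis by (simp add: algebra_simps)
qed

lemma minus_ln_mult_sqrt_le: "0 < x \<Longrightarrow> - ln x * x powr (1/2) \<le> 2" for x :: real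
proof -
  assume x: "0 < x"
  then have u: "0 < sqrt x" by simp
  have "- ln x * sqrt x = 2 * (- ln (sqrt x) * sqrt x)" using x by (simp add: ln_sqrt)
  also have "\<dots> \<le> 2 * ((1 / sqrt x - 1) * sqrt x)"
    using ln_le_minus_one[of "1 / sqrt x"] u by (intro mult_left_mono mult_right_mono) (auto simp: ln_div)
  also have "\<dots> = 2 * (1 - sqrt x)" using u by (simp add: field_simps)
  also have "\<dots> \<le> 2" using u by simp
  finally show ?thesis using x by (simp add: powr_half_sqrt)
qed

lemma powr_one_minus_sub_le:
  fixes x e :: real assumes "x \<ge> 0" "0 < e" "e \<le> 1/2"
  shows "x powr (1 - e) - x \<le> 2 * e"
proof -
  consider "x \<ge> 1" | "x = 0" | "0 < x" "x < 1" using assms by linarith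
  then show ?thesis
  proof cases
    case 1
    then have "x powr (1 - e) \<le> x powr 1" using assms by (intro powr_mono) auto
    then show ?thesis using 1 assms by simp
  next
    case 2 then show ?thesis using assms by simp
  next
    case 3
    define L where "L = - ln x"
    have L: "L > 0" using 3 by (simp add: L_def)
    have "x powr (1 - e) = exp (ln x + e * L)"
      using 3 by (simp add: powr_def L_def algebra_simps)
    also have "\<dots> = x * exp (e * L)" using 3 by (simp only: exp_add exp_ln)
    finally have pw: "x powr (1 - e) = x * exp (e * L)" .
    have "x powr (1 - e) - x = x * (exp (e * L) - 1)" using pw by (simp add: algebra_simps)
    also have "\<dots> \<le> x * (e * L * exp (e * L))"
      using exp_minus_one_le[of "e * L"] 3 by (intro mult_left_mono) auto
    also have "\<dots> = e * (L * x powr (1 - e))" using pw by simp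
    also have "\<dots> \<le> e * (L * x powr (1/2))"
      using assms 3 L by (intro mult_left_mono powr_mono') auto
    also have "\<dots> \<le> e * 2"
      using minus_ln_mult_sqrt_le[of x] 3 assms by (intro mult_left_mono) (auto simp: L_def)
    finally show ?thesis by simp
  qed
qed

lemma powr_quot_ge:
  fixes x e :: real assumes "x \<ge> 0" "0 < e" "e \<le> 1/2"
  shows "-2 \<le> powr_quot e x"
  using powr_one_minus_sub_le[OF assms] assms by (simp add: powr_quot_def le_divide_eq)

lemma powr_quot_tendsto:
  fixes x :: real assumes "x \<ge> 0"
  shows "(\<lambda>n. powr_quot (1 / (real n + 2)) x) \<longlonglongrightarrow> x * ln x"
proof (cases "x = 0")
  case True then show ?thesis by (simp add: powr_quot_def)
next
  case False
  then have x: "x > 0" using assms by simp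
  define f where "f e = exp ((1 - e) * ln x)" for e :: real
  have "(f has_field_derivative (exp ((1 - 0) * ln x) * (- ln x))) (at 0)"
    unfolding f_def by (auto intro!: derivative_eq_intros)
  then have d: "((\<lambda>e. (f e - f 0) / (e - 0)) \<longlongrightarrow> - x * ln x) (at 0)"
    using x by (simp add: has_field_derivative_iff)
  have e: "filterlim (\<lambda>n. 1 / (real n + 2)) (at 0) sequentially"
  proof (rule filterlim_atI)
    show "(\<lambda>n. 1 / (real n + 2)) \<longlonglongrightarrow> 0"
      using LIMSEQ_ignore_initial_segment[OF lim_1_over_n, of 2] by (simp add: add.commute)
  qed simp
  have "(\<lambda>n. - ((f (1 / (real n + 2)) - f 0) / (1 / (real n + 2) - 0))) \<longlonglongrightarrow> - (- x * ln x)"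
    by (rule tendsto_minus[OF filterlim_compose[OF d e]])
  moreover have "powr_quot (1 / (real n + 2)) x
      = - ((f (1 / (real n + 2)) - f 0) / (1 / (real n + 2) - 0))" for n
    using x by (simp add: f_def powr_quot_def powr_def field_simps)
  ultimately show ?thesis by simp
qed

subsection \<open>Choice of the fractional exponent\<close>

lemma (in finite_measure) integrable_powr_of_sq:
  fixes X :: "'a \<Rightarrow> real"
  assumes "X \<in> borel_measurable M" "integrable M (\<lambda>\<omega>. (X \<omega>)\<^sup>2)" "\<And>\<omega>. X \<omega> \<ge> 0"
    and "0 < th" "th \<le> 1"
  shows "integrable M (\<lambda>\<omega>. X \<omega> powr th)"
proof (rule Bochner_Integration.integrable_bound)
  show "integrable M (\<lambda>\<omega>. 1 + (X \<omega>)\<^sup>2)" using assms(2) by simp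
  show "(\<lambda>\<omega>. X \<omega> powr th) \<in> borel_measurable M" using assms(1) by measurable
  show "AE \<omega> in M. norm (X \<omega> powr th) \<le> norm (1 + (X \<omega>)\<^sup>2)"
    using powr_le_one_plus_sq[OF assms(3) assms(4,5)] by simp
qed

lemma (in finite_measure) integrable_of_sq:
  fixes X :: "'a \<Rightarrow> real"
  assumes "X \<in> borel_measurable M" "integrable M (\<lambda>\<omega>. (X \<omega>)\<^sup>2)" "\<And>\<omega>. X \<omega> \<ge> 0"
  shows "integrable M X"
proof -
  have "(\<lambda>\<omega>. X \<omega> powr 1) = X" using assms(3) by (simp add: fun_eq_iff)
  then show ?thesis using integrable_powr_of_sq[OF assms, of 1] by simp
qed

lemma (in prob_space) expectation_powr_quot_tendsto:
  fixes X :: "'a \<Rightarrow> real"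
  assumes meas: "X \<in> borel_measurable M" and sq: "integrable M (\<lambda>\<omega>. (X \<omega>)\<^sup>2)"
    and nn: "\<And>\<omega>. X \<omega> \<ge> 0"
  shows "(\<lambda>n. expectation (\<lambda>\<omega>. powr_quot (1 / (real n + 2)) (X \<omega>)))
           \<longlonglongrightarrow> expectation (\<lambda>\<omega>. X \<omega> * ln (X \<omega>))"
proof (rule integral_dominated_convergence[where w = "\<lambda>\<omega>. 2 + (X \<omega>)\<^sup>2"])
  show "(\<lambda>\<omega>. X \<omega> * ln (X \<omega>)) \<in> borel_measurable M" using meas by measurable
  show "(\<lambda>\<omega>. powr_quot (1 / (real n + 2)) (X \<omega>)) \<in> borel_measurable M" for n
    using meas unfolding powr_quot_def by measurable
  show "integrable M (\<lambda>\<omega>. 2 + (X \<omega>)\<^sup>2)" using sq by simp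
  show "AE \<omega> in M. (\<lambda>n. powr_quot (1 / (real n + 2)) (X \<omega>)) \<longlonglongrightarrow> X \<omega> * ln (X \<omega>)"
    using powr_quot_tendsto nn by simp
  show "AE \<omega> in M. norm (powr_quot (1 / (real n + 2)) (X \<omega>)) \<le> 2 + (X \<omega>)\<^sup>2" for n
  proof (intro AE_I2)
    fix \<omega>
    let ?x = "X \<omega>" and ?e = "1 / (real n + 2)"
    have "?x * ln ?x \<le> ?x\<^sup>2"
    proof (cases "?x = 0")
      case False
      then have "ln ?x \<le> ?x" using nn[of \<omega>] ln_le_minus_one[of ?x] by simp
      then show ?thesis using nn[of \<omega>] by (simp add: power2_eq_square mult_left_mono)
    qed simp
    moreover have "-2 \<le> powr_quot ?e ?x" "powr_quot ?e ?x \<le> ?x * ln ?x"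
      using powr_quot_ge[of ?x ?e] powr_quot_le_xlnx[of ?x ?e] nn[of \<omega>] by (auto simp: field_simps)
    ultimately show "norm (powr_quot ?e ?x) \<le> 2 + ?x\<^sup>2"
      unfolding real_norm_def abs_le_iff using zero_le_power2[of ?x] by linarith
  qed
qed

text \<open>If sum_z E (X_z ln X_z) > s ln s with s = sum_z E X_z, then some fractional moment
  sum_z E X_z^th falls below s^th: otherwise letting th -> 1 in the difference
  quotients would reverse the entropy inequality.\<close>
lemma (in prob_space) exists_fractional_exponent:
  fixes X :: "'i \<Rightarrow> 'a \<Rightarrow> real" and Z :: "'i set"
  assumes Z: "finite Z"
    and meas: "\<And>z. z \<in> Z \<Longrightarrow> X z \<in> borel_measurable M"
    and sq: "\<And>z. z \<in> Z \<Longrightarrow> integrable M (\<lambda>\<omega>. (X z \<omega>)\<^sup>2)"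
    and nn: "\<And>z \<omega>. X z \<omega> \<ge> 0"
    and s: "s = (\<Sum>z\<in>Z. expectation (X z))" "s > 0"
    and ent: "(\<Sum>z\<in>Z. expectation (\<lambda>\<omega>. X z \<omega> * ln (X z \<omega>))) > s * ln s"
  shows "\<exists>th. 0 < th \<and> th < 1 \<and> (\<Sum>z\<in>Z. expectation (\<lambda>\<omega>. X z \<omega> powr th)) < s powr th"
proof (rule ccontr)
  assume contra: "\<not> ?thesis"
  define e where "e n = 1 / (real n + 2)" for n :: nat
  have e: "0 < e n" "e n < 1" for n by (auto simp: e_def field_simps)
  have int: "integrable M (X z)" "integrable M (\<lambda>\<omega>. X z \<omega> powr (1 - e n))"
    if "z \<in> Z" for z n
    using integrable_of_sq[OF meas sq nn] integrable_powr_of_sq[OF meas sq nn, of z "1 - e n"]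
      that e[of n] by auto
  have quot_le: "(\<Sum>z\<in>Z. expectation (\<lambda>\<omega>. powr_quot (e n) (X z \<omega>))) \<le> powr_quot (e n) s" for n
  proof -
    have "0 < 1 - e n" "1 - e n < 1" using e[of n] by auto
    then have "\<not> (\<Sum>z\<in>Z. expectation (\<lambda>\<omega>. X z \<omega> powr (1 - e n))) < s powr (1 - e n)"
      using contra by blast
    then have ge: "s powr (1 - e n) \<le> (\<Sum>z\<in>Z. expectation (\<lambda>\<omega>. X z \<omega> powr (1 - e n)))"
      by simp
    have "(\<Sum>z\<in>Z. expectation (\<lambda>\<omega>. powr_quot (e n) (X z \<omega>)))
        = (\<Sum>z\<in>Z. (expectation (X z) - expectation (\<lambda>\<omega>. X z \<omega> powr (1 - e n))) / e n)"
      unfolding powr_quot_def by (intro sum.cong refl) (simp add: int)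
    also have "\<dots> = (s - (\<Sum>z\<in>Z. expectation (\<lambda>\<omega>. X z \<omega> powr (1 - e n)))) / e n"
      by (simp add: s(1) sum_divide_distrib[symmetric] sum_subtractf)
    also have "\<dots> \<le> powr_quot (e n) s"
      unfolding powr_quot_def using ge e[of n] by (intro divide_right_mono) auto
    finally show ?thesis .
  qed
  have lim: "(\<lambda>n. \<Sum>z\<in>Z. expectation (\<lambda>\<omega>. powr_quot (e n) (X z \<omega>)))
      \<longlonglongrightarrow> (\<Sum>z\<in>Z. expectation (\<lambda>\<omega>. X z \<omega> * ln (X z \<omega>)))"
    unfolding e_def
    by (intro tendsto_sum expectation_powr_quot_tendsto meas sq nn)
  have "(\<Sum>z\<in>Z. expectation (\<lambda>\<omega>. X z \<omega> * ln (X z \<omega>))) \<le> s * ln s"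
    by (rule LIMSEQ_le[OF lim powr_quot_tendsto[OF less_imp_le[OF s(2)], folded e_def]])
       (use quot_le in auto)
  then show False using ent by simp
qed

lemma l1norm_component_le: "\<bar>x $ i\<bar> \<le> l1norm x"
  unfolding l1norm_def by (rule member_le_sum) auto

lemma l1norm_triangle: "l1norm (a + b) \<le> l1norm a + l1norm b"
  unfolding l1norm_def sum.distrib[symmetric] by (rule sum_mono) (simp add: abs_triangle_ineq)

lemma l1norm_minus_commute: "l1norm (a - b) = l1norm (b - a)"
  unfolding l1norm_def by (intro sum.cong refl) simp

lemma finite_l1ball: "finite {z :: int ^ 'd::finite. l1norm z \<le> R}"
proof -
  have "vec_nth ` {z :: int ^ 'd. l1norm z \<le> R} \<subseteq> PiE UNIV (\<lambda>_. {-R..R})"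
  proof
    fix f assume "f \<in> vec_nth ` {z :: int ^ 'd. l1norm z \<le> R}"
    then obtain z :: "int ^ 'd" where z: "l1norm z \<le> R" "f = vec_nth z" by auto
    have "z $ i \<in> {-R..R}" for i using l1norm_component_le[of z i] z by auto
    then show "f \<in> PiE UNIV (\<lambda>_. {-R..R})" using z by auto
  qed
  then have "finite (vec_nth ` {z :: int ^ 'd. l1norm z \<le> R})"
    by (rule finite_subset) (intro finite_PiE, auto)
  then show ?thesis by (rule finite_imageD) (auto intro: inj_onI simp: vec_eq_iff)
qed

text \<open>The sites within distance t r of the support of N0: after t steps of an
  evolution with range r the population lives on this finite set.\<close>
definition reach :: "(int ^ 'd::finite \<Rightarrow> real) \<Rightarrow> nat \<Rightarrow> nat \<Rightarrow> (int ^ 'd) set" where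
  "reach N0 r t = {x. \<exists>x0. 0 < N0 x0 \<and> l1norm (x - x0) \<le> int (t * r)}"

lemma finite_reach:
  assumes "finite {x. N0 x > 0}"
  shows "finite (reach N0 r t)"
proof -
  have "reach N0 r t \<subseteq> (\<Union>x0\<in>{x. N0 x > 0}. (\<lambda>z. x0 + z) ` {z. l1norm z \<le> int (t * r)})"
  proof
    fix x assume "x \<in> reach N0 r t"
    then obtain x0 where "0 < N0 x0" "l1norm (x - x0) \<le> int (t * r)" by (auto simp: reach_def)
    then show "x \<in> (\<Union>x0\<in>{x. N0 x > 0}. (\<lambda>z. x0 + z) ` {z. l1norm z \<le> int (t * r)})"
      by (intro UN_I[of x0]) (auto intro!: image_eqI[of _ _ "x - x0"])
  qed
  then show ?thesis
    by (rule finite_subset) (intro finite_UN_I assms finite_imageI finite_l1ball)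
qed

lemma reach_step:
  assumes "x \<in> reach N0 r t" "y \<notin> reach N0 r (Suc t)"
  shows "int r < l1norm (x - y)"
proof (rule ccontr)
  assume "\<not> ?thesis"
  then have h: "l1norm (y - x) \<le> int r" using l1norm_minus_commute[of x y] by simp
  obtain x0 where x0: "0 < N0 x0" "l1norm (x - x0) \<le> int (t * r)"
    using assms(1) by (auto simp: reach_def)
  have "l1norm (y - x0) \<le> l1norm (y - x) + l1norm (x - x0)"
    using l1norm_triangle[of "y - x" "x - x0"] by simp
  also have "\<dots> \<le> int (Suc t * r)" using h x0 by simp
  finally show False using assms(2) x0 by (auto simp: reach_def)
qed

subsection \<open>The evolution as a finite recursion\<close>

fun pop_fin :: "(int ^ 'd::finite \<Rightarrow> real) \<Rightarrow> nat \<Rightarrow> nat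
                \<Rightarrow> (nat \<Rightarrow> int ^ 'd \<Rightarrow> int ^ 'd \<Rightarrow> real) \<Rightarrow> int ^ 'd \<Rightarrow> real" where
  "pop_fin N0 r 0 F = N0"
| "pop_fin N0 r (Suc t) F = (\<lambda>y. \<Sum>x\<in>reach N0 r t. pop_fin N0 r t F x * F (Suc t) x y)"

definition finite_range :: "nat \<Rightarrow> (nat \<Rightarrow> int ^ 'd::finite \<Rightarrow> int ^ 'd \<Rightarrow> real) \<Rightarrow> bool" where
  "finite_range r F \<longleftrightarrow> (\<forall>t\<ge>1. \<forall>x y. int r < l1norm (x - y) \<longrightarrow> F t x y = 0)"

lemma pop_fin_outside:
  assumes "finite_range r F" "x \<notin> reach N0 r t" "\<And>x. N0 x \<ge> 0"
  shows "pop_fin N0 r t F x = 0"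
proof (cases t)
  case 0
  then have "\<not> 0 < N0 x" using assms(2) by (force simp: reach_def l1norm_def)
  then show ?thesis using assms(3)[of x] 0 by simp
next
  case (Suc s)
  have "F (Suc s) x' x = 0" if "x' \<in> reach N0 r s" for x'
    using assms(1) reach_step[OF that, of x] assms(2) Suc unfolding finite_range_def by auto
  then show ?thesis using Suc by simp
qed

lemma pop_fin_cong: "(\<And>i. i \<in> {1..t} \<Longrightarrow> F i = G i) \<Longrightarrow> pop_fin N0 r t F = pop_fin N0 r t G"
  by (induction t) auto

lemma pop_eq_pop_fin:
  assumes "finite_range r (\<lambda>i. A i \<omega>)" "finite {x. N0 x > 0}" "\<And>x. N0 x \<ge> 0"
  shows "pop N0 A t \<omega> = pop_fin N0 r t (\<lambda>i. A i \<omega>)"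
proof (induction t)
  case 0 then show ?case by simp
next
  case (Suc t)
  show ?case
  proof
    fix y
    have "pop N0 A (Suc t) \<omega> y = infsum (\<lambda>x. pop_fin N0 r t (\<lambda>i. A i \<omega>) x * A (Suc t) \<omega> x y) UNIV"
      using Suc by simp
    also have "\<dots> = infsum (\<lambda>x. pop_fin N0 r t (\<lambda>i. A i \<omega>) x * A (Suc t) \<omega> x y) (reach N0 r t)"
      by (rule infsum_cong_neutral) (use pop_fin_outside[OF assms(1) _ assms(3)] in auto)
    also have "\<dots> = pop_fin N0 r (Suc t) (\<lambda>i. A i \<omega>) y"
      using finite_reach[OF assms(2)] by simp
    finally show "pop N0 A (Suc t) \<omega> y = pop_fin N0 r (Suc t) (\<lambda>i. A i \<omega>) y" .
  qed
qed

lemma mat_entry_measurable[measurable]: "(\<lambda>m. m x y) \<in> borel_measurable matM"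
proof -
  have "(\<lambda>m. m x) \<in> measurable matM colM" unfolding matM_def colM_def
    by (rule measurable_component_singleton) simp
  moreover have "(\<lambda>c. c y) \<in> borel_measurable colM" unfolding colM_def
    by (rule measurable_component_singleton) simp
  ultimately show ?thesis by (rule measurable_compose)
qed

lemma pop_fin_measurable:
  assumes "{1..t} \<subseteq> I"
  shows "(\<lambda>F. pop_fin N0 r t F x) \<in> borel_measurable (PiM I (\<lambda>_. matM))"
  using assms
proof (induction t arbitrary: x)
  case 0 then show ?case by simp
next
  case (Suc t)
  have IH: "(\<lambda>F. pop_fin N0 r t F x') \<in> borel_measurable (PiM I (\<lambda>_. matM))" for x'
    using Suc by (intro Suc.IH) auto
  have "Suc t \<in> I" using Suc.prems by auto
  then have component: "(\<lambda>F. F (Suc t)) \<in> measurable (PiM I (\<lambda>_. matM)) matM"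
    by (rule measurable_component_singleton)
  have "(\<lambda>F. F (Suc t) x' x) \<in> borel_measurable (PiM I (\<lambda>_. matM))" for x'
    using measurable_compose[OF component mat_entry_measurable[of x' x]] by simp
  then show ?case using IH by simp
qed

lemma (in prob_space) indep_var_nn_integral:
  fixes X Y :: "'a \<Rightarrow> ennreal"
  assumes "indep_var borel X borel Y"
  shows "(\<integral>\<^sup>+\<omega>. X \<omega> * Y \<omega> \<partial>M) = (\<integral>\<^sup>+\<omega>. X \<omega> \<partial>M) * (\<integral>\<^sup>+\<omega>. Y \<omega> \<partial>M)"
proof -
  have borel_eq: "(\<lambda> _. borel) = case_bool borel borel"
    by (rule ext, metis (full_types) bool.simps(3) bool.simps(4))
  have iv: "indep_vars (\<lambda>_. borel) (case_bool X Y) UNIV"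
    using assms unfolding indep_var_def borel_eq .
  have "(\<integral>\<^sup>+\<omega>. X \<omega> * Y \<omega> \<partial>M) = (\<integral>\<^sup>+\<omega>. (\<Prod>i\<in>UNIV. case_bool X Y i \<omega>) \<partial>M)"
    by (simp add: UNIV_bool mult.commute)
  also have "\<dots> = (\<Prod>i\<in>UNIV. \<integral>\<^sup>+\<omega>. case_bool X Y i \<omega> \<partial>M)"
    by (rule indep_vars_nn_integral[OF _ iv]) auto
  also have "\<dots> = (\<integral>\<^sup>+\<omega>. X \<omega> \<partial>M) * (\<integral>\<^sup>+\<omega>. Y \<omega> \<partial>M)"
    by (simp add: UNIV_bool mult.commute)
  finally show ?thesis .
qed

lemma sum_translate_le:
  fixes g :: "int ^ 'd::finite \<Rightarrow> ennreal"
  assumes "finite W" "finite Z" "\<And>z. z \<notin> Z \<Longrightarrow> g z = 0"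
  shows "(\<Sum>y\<in>W. g (y - x)) \<le> (\<Sum>z\<in>Z. g z)"
proof -
  have "(\<Sum>y\<in>W. g (y - x)) = (\<Sum>z\<in>(\<lambda>y. y - x) ` W. g z)"
    by (rule sum.reindex[symmetric, unfolded comp_def]) (auto intro: inj_onI)
  also have "\<dots> \<le> (\<Sum>z\<in>(\<lambda>y. y - x) ` W \<union> Z. g z)"
    by (rule sum_mono2) (use assms in auto)
  also have "\<dots> = (\<Sum>z\<in>Z. g z)"
    by (rule sum.mono_neutral_right) (use assms in auto)
  finally show ?thesis .
qed

lemma sum_abs_div_power_le:
  fixes q :: "'a \<Rightarrow> real"
  assumes S: "finite S" and th: "0 < th" "th \<le> 1" and s: "s > 0" and r: "0 < r"
    and P: "(\<Sum>x\<in>S. \<bar>q x\<bar> powr th) < (r * s powr th) ^ t"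
  shows "(\<Sum>x\<in>S. \<bar>q x\<bar>) / s ^ t \<le> exp (- (- ln r / th) * real t)"
proof -
  define T where "T = (\<Sum>x\<in>S. \<bar>q x\<bar>)"
  have T0: "T \<ge> 0" unfolding T_def by (simp add: sum_nonneg)
  show ?thesis
  proof (cases "T = 0")
    case True then show ?thesis by (simp add: T_def[symmetric])
  next
    case False
    then have Tp: "T > 0" using T0 by simp
    have "T powr th \<le> (\<Sum>x\<in>S. \<bar>q x\<bar> powr th)" unfolding T_def
      by (rule powr_sum_le) (use S th in auto)
    then have "exp (th * ln T) < exp (real t * (ln r + th * ln s))"
      using P Tp r s by (simp add: powr_def exp_of_nat_mult exp_add)
    then have "ln T < real t * ln r / th + real t * ln s" using th by (simp add: field_simps)
    then have "T < exp (real t * ln r / th) * exp (real t * ln s)"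
      using Tp by (metis exp_add exp_less_cancel_iff exp_ln)
    also have "exp (real t * ln s) = s ^ t" using s by (simp add: exp_of_nat_mult)
    finally have "T / s ^ t < exp (real t * ln r / th)"
      using s by (simp add: divide_less_eq mult.commute)
    moreover have "exp (- (- ln r / th) * real t) = exp (real t * ln r / th)" by simp
    ultimately show ?thesis unfolding T_def by linarith
  qed
qed

locale lin_stoch_evolution = prob_space M for M :: "'w measure" +
  fixes A :: "nat \<Rightarrow> 'w \<Rightarrow> int ^ 'd::finite \<Rightarrow> int ^ 'd \<Rightarrow> real"
    and N0 :: "int ^ 'd \<Rightarrow> real" and rA :: nat
  assumes indep: "indep_vars (\<lambda>_. matM) A {1..}"
    and distr_eq: "\<And>t. t \<ge> 1 \<Longrightarrow> distr M matM (A t) = distr M matM (A 1)"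
    and nonneg: "\<And>x y. AE \<omega> in M. A 1 \<omega> x y \<ge> 0"
    and square_int: "\<And>x y. integrable M (\<lambda>\<omega>. (A 1 \<omega> x y)\<^sup>2)"
    and range: "\<And>x y. l1norm (x - y) > int rA \<Longrightarrow> (AE \<omega> in M. A 1 \<omega> x y = 0)"
    and shift: "\<And>z. distr M matM (\<lambda>\<omega>. \<lambda>x y. A 1 \<omega> (x + z) (y + z)) = distr M matM (A 1)"
    and N0_nonneg: "\<And>x. N0 x \<ge> 0" and N0_fin: "finite {x. N0 x > 0}"
begin

definition range_ball :: "(int ^ 'd) set" where
  "range_ball = {z. l1norm z \<le> int rA}"

lemma finite_range_ball: "finite range_ball"
  unfolding range_ball_def by (rule finite_l1ball)

lemma A_measurable: "t \<ge> 1 \<Longrightarrow> A t \<in> measurable M matM"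
  using indep unfolding indep_vars_def by auto

lemma A_entry_measurable: "t \<ge> 1 \<Longrightarrow> (\<lambda>\<omega>. A t \<omega> x y) \<in> borel_measurable M"
  using measurable_compose[OF A_measurable mat_entry_measurable[of x y]] by simp

lemma AE_entry_zero: "z \<notin> range_ball \<Longrightarrow> AE \<omega> in M. A 1 \<omega> 0 z = 0"
  using range[of 0 z] l1norm_minus_commute[of 0 z] by (simp add: range_ball_def)

lemma AE_finite_range: "AE \<omega> in M. finite_range rA (\<lambda>i. A i \<omega>)"
proof -
  have "AE \<omega> in M. A t \<omega> x y = 0" if "t \<ge> 1" "int rA < l1norm (x - y)" for t x y
  proof -
    have "AE m in distr M matM (A 1). m x y = 0"
      using range[OF that(2)] A_measurable[of 1] by (subst AE_distr_iff) auto
    then have "AE m in distr M matM (A t). m x y = 0" unfolding distr_eq[OF that(1)] .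
    then show ?thesis using A_measurable[OF that(1)] by (subst (asm) AE_distr_iff) auto
  qed
  then have "AE \<omega> in M. \<forall>t x y. t \<ge> 1 \<and> int rA < l1norm (x - y) \<longrightarrow> A t \<omega> x y = 0"
    by (subst AE_all_countable, intro allI, subst AE_all_countable, intro allI,
        subst AE_all_countable) auto
  then show ?thesis unfolding finite_range_def by auto
qed

lemma nn_integral_A_eq:
  assumes "t \<ge> 1" "h \<in> borel_measurable matM"
  shows "(\<integral>\<^sup>+\<omega>. h (A t \<omega>) \<partial>M) = (\<integral>\<^sup>+\<omega>. h (A 1 \<omega>) \<partial>M)"
proof -
  have "(\<integral>\<^sup>+\<omega>. h (A t \<omega>) \<partial>M) = integral\<^sup>N (distr M matM (A t)) h"
    using assms A_measurable by (subst nn_integral_distr) auto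
  also have "\<dots> = integral\<^sup>N (distr M matM (A 1)) h" using distr_eq[OF assms(1)] by simp
  also have "\<dots> = (\<integral>\<^sup>+\<omega>. h (A 1 \<omega>) \<partial>M)"
    using assms A_measurable by (subst nn_integral_distr) auto
  finally show ?thesis .
qed

lemma shifted_A_measurable: "(\<lambda>\<omega>. \<lambda>x y. A 1 \<omega> (x + z) (y + z)) \<in> measurable M matM"
proof -
  have inner: "(\<lambda>m. \<lambda>y. m (x' + z) (y + z)) \<in> measurable matM colM" for x'
    unfolding colM_def
    by (rule measurable_PiM_single'[where f = "\<lambda>y m. m (x' + z) (y + z)"])
       (auto simp: space_PiM PiE_def extensional_def)
  have mM: "matM = PiM UNIV (\<lambda>_. colM)" by (simp add: matM_def colM_def)
  have "(\<lambda>m. \<lambda>x y. m (x + z) (y + z)) \<in> measurable matM (PiM UNIV (\<lambda>_. colM))"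
    by (rule measurable_PiM_single'[where f = "\<lambda>x m. \<lambda>y. m (x + z) (y + z)"])
       (use inner in \<open>auto simp: space_PiM PiE_def extensional_def colM_def\<close>)
  then have "(\<lambda>m. \<lambda>x y. m (x + z) (y + z)) \<in> measurable matM matM" by (simp only: mM[symmetric])
  from measurable_compose[OF A_measurable[of 1] this] show ?thesis by simp
qed

lemma nn_integral_entry_shift:
  "(\<integral>\<^sup>+\<omega>. ennreal (\<bar>A 1 \<omega> x y\<bar> powr th) \<partial>M) = (\<integral>\<^sup>+\<omega>. ennreal (\<bar>A 1 \<omega> 0 (y - x)\<bar> powr th) \<partial>M)"
proof -
  define h where "h m = ennreal (\<bar>m 0 (y - x)\<bar> powr th)" for m :: "int ^ 'd \<Rightarrow> int ^ 'd \<Rightarrow> real"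
  have h: "h \<in> borel_measurable matM" unfolding h_def by measurable
  have "(\<integral>\<^sup>+\<omega>. ennreal (\<bar>A 1 \<omega> 0 (y - x)\<bar> powr th) \<partial>M) = integral\<^sup>N (distr M matM (A 1)) h"
    using h A_measurable[of 1] by (subst nn_integral_distr) (auto simp: h_def)
  also have "\<dots> = integral\<^sup>N (distr M matM (\<lambda>\<omega>. \<lambda>x' y'. A 1 \<omega> (x' + x) (y' + x))) h"
    using shift[of x] by simp
  also have "\<dots> = (\<integral>\<^sup>+\<omega>. ennreal (\<bar>A 1 \<omega> x y\<bar> powr th) \<partial>M)"
    using h shifted_A_measurable[of x] by (subst nn_integral_distr) (auto simp: h_def)
  finally show ?thesis by simp
qed

lemma pop_fin_A_measurable: "(\<lambda>\<omega>. pop_fin N0 rA t (\<lambda>i. A i \<omega>) x) \<in> borel_measurable M"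
proof -
  have r: "(\<lambda>\<omega>. restrict (\<lambda>i. A i \<omega>) {1..t}) \<in> measurable M (PiM {1..t} (\<lambda>_. matM))"
    by (rule measurable_restrict) (use A_measurable in auto)
  have "(\<lambda>\<omega>. pop_fin N0 rA t (restrict (\<lambda>i. A i \<omega>) {1..t}) x) \<in> borel_measurable M"
    using measurable_compose[OF r pop_fin_measurable[of t "{1..t}" N0 rA x]] by simp
  moreover have "pop_fin N0 rA t (restrict (\<lambda>i. A i \<omega>) {1..t}) = pop_fin N0 rA t (\<lambda>i. A i \<omega>)" for \<omega>
    by (rule pop_fin_cong) simp
  ultimately show ?thesis by simp
qed

lemma nn_integral_pop_fin_A_indep:
  "(\<integral>\<^sup>+\<omega>. ennreal (\<bar>pop_fin N0 rA t (\<lambda>i. A i \<omega>) x\<bar> powr th) * ennreal (\<bar>A (Suc t) \<omega> x y\<bar> powr th) \<partial>M)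
    = (\<integral>\<^sup>+\<omega>. ennreal (\<bar>pop_fin N0 rA t (\<lambda>i. A i \<omega>) x\<bar> powr th) \<partial>M)
      * (\<integral>\<^sup>+\<omega>. ennreal (\<bar>A (Suc t) \<omega> x y\<bar> powr th) \<partial>M)"
proof (rule indep_var_nn_integral)
  define past where "past \<omega> = restrict (\<lambda>i. A i \<omega>) {1..t}" for \<omega>
  define now where "now \<omega> = restrict (\<lambda>i. A i \<omega>) {Suc t}" for \<omega>
  define Y1 where "Y1 F = ennreal (\<bar>pop_fin N0 rA t F x\<bar> powr th)" for F :: "nat \<Rightarrow> int ^ 'd \<Rightarrow> int ^ 'd \<Rightarrow> real"
  define Y2 where "Y2 F = ennreal (\<bar>F (Suc t) x y\<bar> powr th)" for F :: "nat \<Rightarrow> int ^ 'd \<Rightarrow> int ^ 'd \<Rightarrow> real"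
  have iv: "indep_var (PiM {1..t} (\<lambda>_. matM)) past (PiM {Suc t} (\<lambda>_. matM)) now"
    unfolding past_def now_def by (rule indep_var_restrict[OF indep]) auto
  have m1: "Y1 \<in> borel_measurable (PiM {1..t} (\<lambda>_. matM))"
    using pop_fin_measurable[of t "{1..t}" N0 rA x] unfolding Y1_def by measurable
  have component: "(\<lambda>F. F (Suc t)) \<in> measurable (PiM {Suc t} (\<lambda>_. matM)) matM"
    by (rule measurable_component_singleton) simp
  have m2: "Y2 \<in> borel_measurable (PiM {Suc t} (\<lambda>_. matM))"
    using measurable_compose[OF component mat_entry_measurable[of x y]] unfolding Y2_def by measurable
  have "pop_fin N0 rA t (past \<omega>) = pop_fin N0 rA t (\<lambda>i. A i \<omega>)" for \<omega>
    unfolding past_def by (rule pop_fin_cong) simp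
  then have "Y1 \<circ> past = (\<lambda>\<omega>. ennreal (\<bar>pop_fin N0 rA t (\<lambda>i. A i \<omega>) x\<bar> powr th))"
    by (simp add: Y1_def fun_eq_iff)
  moreover have "Y2 \<circ> now = (\<lambda>\<omega>. ennreal (\<bar>A (Suc t) \<omega> x y\<bar> powr th))"
    by (auto simp: Y2_def now_def)
  ultimately show "indep_var borel (\<lambda>\<omega>. ennreal (\<bar>pop_fin N0 rA t (\<lambda>i. A i \<omega>) x\<bar> powr th))
      borel (\<lambda>\<omega>. ennreal (\<bar>A (Suc t) \<omega> x y\<bar> powr th))"
    using indep_var_compose[OF iv m1 m2] by simp
qed

subsection \<open>The fractional moment recursion\<close>

definition frac_moment :: "real \<Rightarrow> nat \<Rightarrow> 'w \<Rightarrow> real" where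
  "frac_moment th t \<omega> = (\<Sum>x\<in>reach N0 rA t. \<bar>pop_fin N0 rA t (\<lambda>i. A i \<omega>) x\<bar> powr th)"

definition moment_factor :: "real \<Rightarrow> ennreal" where
  "moment_factor th = (\<Sum>z\<in>range_ball. \<integral>\<^sup>+\<omega>. ennreal (\<bar>A 1 \<omega> 0 z\<bar> powr th) \<partial>M)"

lemma frac_moment_measurable: "frac_moment th t \<in> borel_measurable M"
  unfolding frac_moment_def[abs_def] using pop_fin_A_measurable by measurable

lemma frac_moment_nonneg: "frac_moment th t \<omega> \<ge> 0"
  unfolding frac_moment_def by (simp add: sum_nonneg)

text \<open>Pointwise, by subadditivity of u |-> u^th:
  Phi_{t+1} <= sum_y sum_x |N_{t,x}|^th |A_{t+1,x,y}|^th.\<close>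
lemma frac_moment_Suc_le:
  assumes th: "0 < th" "th \<le> 1"
  shows "frac_moment th (Suc t) \<omega> \<le> (\<Sum>y\<in>reach N0 rA (Suc t). \<Sum>x\<in>reach N0 rA t.
            \<bar>pop_fin N0 rA t (\<lambda>i. A i \<omega>) x\<bar> powr th * \<bar>A (Suc t) \<omega> x y\<bar> powr th)"
  unfolding frac_moment_def
proof (rule sum_mono)
  fix y
  let ?q = "\<lambda>x. pop_fin N0 rA t (\<lambda>i. A i \<omega>) x" and ?a = "\<lambda>x. A (Suc t) \<omega> x y"
  have "\<bar>pop_fin N0 rA (Suc t) (\<lambda>i. A i \<omega>) y\<bar> \<le> (\<Sum>x\<in>reach N0 rA t. \<bar>?q x * ?a x\<bar>)"
    by simp
  then have "\<bar>pop_fin N0 rA (Suc t) (\<lambda>i. A i \<omega>) y\<bar> powr th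
      \<le> (\<Sum>x\<in>reach N0 rA t. \<bar>?q x * ?a x\<bar>) powr th"
    using th by (intro powr_mono2) auto
  also have "\<dots> \<le> (\<Sum>x\<in>reach N0 rA t. \<bar>?q x * ?a x\<bar> powr th)"
    by (rule powr_sum_le) (use finite_reach[OF N0_fin] th in auto)
  finally show "\<bar>pop_fin N0 rA (Suc t) (\<lambda>i. A i \<omega>) y\<bar> powr th
      \<le> (\<Sum>x\<in>reach N0 rA t. \<bar>?q x\<bar> powr th * \<bar>?a x\<bar> powr th)"
    by (simp add: abs_mult powr_mult)
qed

text \<open>Expectation of one term of the bound above, by independence, identical
  distribution and shift invariance.\<close>
lemma nn_integral_step_term:
  "(\<integral>\<^sup>+\<omega>. ennreal (\<bar>pop_fin N0 rA t (\<lambda>i. A i \<omega>) x\<bar> powr th) * ennreal (\<bar>A (Suc t) \<omega> x y\<bar> powr th) \<partial>M)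
    = (\<integral>\<^sup>+\<omega>. ennreal (\<bar>pop_fin N0 rA t (\<lambda>i. A i \<omega>) x\<bar> powr th) \<partial>M)
      * (\<integral>\<^sup>+\<omega>. ennreal (\<bar>A 1 \<omega> 0 (y - x)\<bar> powr th) \<partial>M)"
  unfolding nn_integral_pop_fin_A_indep nn_integral_entry_shift[symmetric]
  by (subst nn_integral_A_eq[where h = "\<lambda>m. ennreal (\<bar>m x y\<bar> powr th)"]) auto

lemma moment_factor_bound:
  assumes "0 < th"
  shows "(\<Sum>y\<in>reach N0 rA (Suc t). \<integral>\<^sup>+\<omega>. ennreal (\<bar>A 1 \<omega> 0 (y - x)\<bar> powr th) \<partial>M)
           \<le> moment_factor th"
  unfolding moment_factor_def
proof (rule sum_translate_le[OF finite_reach[OF N0_fin] finite_range_ball])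
  fix z assume "z \<notin> range_ball"
  then have "(\<integral>\<^sup>+\<omega>. ennreal (\<bar>A 1 \<omega> 0 z\<bar> powr th) \<partial>M) = (\<integral>\<^sup>+\<omega>. 0 \<partial>M)"
    using AE_entry_zero assms by (intro nn_integral_cong_AE) auto
  then show "(\<integral>\<^sup>+\<omega>. ennreal (\<bar>A 1 \<omega> 0 z\<bar> powr th) \<partial>M) = 0" by simp
qed

lemma frac_moment_step:
  assumes th: "0 < th" "th \<le> 1"
  shows "(\<integral>\<^sup>+\<omega>. frac_moment th (Suc t) \<omega> \<partial>M) \<le> moment_factor th * (\<integral>\<^sup>+\<omega>. frac_moment th t \<omega> \<partial>M)"
proof -
  let ?S = "reach N0 rA t" and ?S' = "reach N0 rA (Suc t)"
  define q where "q x \<omega> = ennreal (\<bar>pop_fin N0 rA t (\<lambda>i. A i \<omega>) x\<bar> powr th)" for x \<omega>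
  define a where "a x y \<omega> = ennreal (\<bar>A (Suc t) \<omega> x y\<bar> powr th)" for x y \<omega>
  define g where "g z = (\<integral>\<^sup>+\<omega>. ennreal (\<bar>A 1 \<omega> 0 z\<bar> powr th) \<partial>M)" for z
  have q_meas: "q x \<in> borel_measurable M" for x unfolding q_def using pop_fin_A_measurable by measurable
  have a_meas: "a x y \<in> borel_measurable M" for x y
    unfolding a_def using A_entry_measurable[of "Suc t" x y] by measurable
  have "(\<integral>\<^sup>+\<omega>. frac_moment th (Suc t) \<omega> \<partial>M) \<le> (\<integral>\<^sup>+\<omega>. (\<Sum>y\<in>?S'. \<Sum>x\<in>?S. q x \<omega> * a x y \<omega>) \<partial>M)"
  proof (rule nn_integral_mono)
    fix \<omega>
    have "ennreal (frac_moment th (Suc t) \<omega>) \<le> ennreal (\<Sum>y\<in>?S'. \<Sum>x\<in>?S.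
            \<bar>pop_fin N0 rA t (\<lambda>i. A i \<omega>) x\<bar> powr th * \<bar>A (Suc t) \<omega> x y\<bar> powr th)"
      by (rule ennreal_leI) (rule frac_moment_Suc_le[OF th])
    also have "\<dots> = (\<Sum>y\<in>?S'. \<Sum>x\<in>?S. q x \<omega> * a x y \<omega>)"
      by (simp add: q_def a_def ennreal_mult sum_nonneg flip: sum_ennreal)
    finally show "ennreal (frac_moment th (Suc t) \<omega>) \<le> (\<Sum>y\<in>?S'. \<Sum>x\<in>?S. q x \<omega> * a x y \<omega>)" .
  qed
  also have "\<dots> = (\<Sum>y\<in>?S'. \<Sum>x\<in>?S. \<integral>\<^sup>+\<omega>. q x \<omega> * a x y \<omega> \<partial>M)"
    using q_meas a_meas by (simp add: nn_integral_sum)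
  also have "\<dots> = (\<Sum>y\<in>?S'. \<Sum>x\<in>?S. (\<integral>\<^sup>+\<omega>. q x \<omega> \<partial>M) * g (y - x))"
    unfolding q_def a_def g_def by (simp only: nn_integral_step_term)
  also have "\<dots> = (\<Sum>x\<in>?S. (\<integral>\<^sup>+\<omega>. q x \<omega> \<partial>M) * (\<Sum>y\<in>?S'. g (y - x)))"
    by (subst sum.swap) (simp add: sum_distrib_left)
  also have "\<dots> \<le> (\<Sum>x\<in>?S. (\<integral>\<^sup>+\<omega>. q x \<omega> \<partial>M) * moment_factor th)"
    unfolding g_def using moment_factor_bound[OF th(1)] by (intro sum_mono mult_left_mono) auto
  also have "\<dots> = moment_factor th * (\<integral>\<^sup>+\<omega>. (\<Sum>x\<in>?S. q x \<omega>) \<partial>M)"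
    using q_meas by (simp add: nn_integral_sum sum_distrib_left mult.commute)
  also have "(\<integral>\<^sup>+\<omega>. (\<Sum>x\<in>?S. q x \<omega>) \<partial>M) = (\<integral>\<^sup>+\<omega>. frac_moment th t \<omega> \<partial>M)"
    by (simp add: frac_moment_def q_def sum_nonneg flip: sum_ennreal)
  finally show ?thesis .
qed

lemma frac_moment_bound:
  assumes th: "0 < th" "th \<le> 1"
  shows "(\<integral>\<^sup>+\<omega>. frac_moment th t \<omega> \<partial>M)
           \<le> moment_factor th ^ t * (\<Sum>x\<in>reach N0 rA 0. \<bar>N0 x\<bar> powr th)"
proof (induction t)
  case 0
  show ?case by (simp add: frac_moment_def emeasure_space_1)
next
  case (Suc t)
  have "(\<integral>\<^sup>+\<omega>. frac_moment th (Suc t) \<omega> \<partial>M) \<le> moment_factor th * (\<integral>\<^sup>+\<omega>. frac_moment th t \<omega> \<partial>M)"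
    by (rule frac_moment_step[OF th])
  also have "\<dots> \<le> moment_factor th * (moment_factor th ^ t * (\<Sum>x\<in>reach N0 rA 0. \<bar>N0 x\<bar> powr th))"
    by (rule mult_left_mono[OF Suc.IH]) simp
  finally show ?case by (simp add: mult.assoc)
qed

subsection \<open>Almost sure exponential decay\<close>

text \<open>Markov's inequality and Borel-Cantelli: if K(th) < b then almost surely
  Phi_t < b^t for all large t.\<close>
lemma AE_eventually_frac_moment_less:
  assumes th: "0 < th" "th \<le> 1"
    and K: "moment_factor th = ennreal Kr" "0 \<le> Kr" "Kr < b"
  shows "AE \<omega> in M. eventually (\<lambda>t. frac_moment th t \<omega> < b ^ t) sequentially"
proof -
  define C0 where "C0 = (\<Sum>x\<in>reach N0 rA 0. \<bar>N0 x\<bar> powr th)"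
  have C0: "C0 \<ge> 0" unfolding C0_def by (simp add: sum_nonneg)
  have b: "0 < b" using K by simp
  define E where "E t = {\<omega> \<in> space M. b ^ t \<le> frac_moment th t \<omega>}" for t
  have E_sets: "E t \<in> sets M" for t
    unfolding E_def using frac_moment_measurable[of th t] by measurable
  have nn_le: "(\<integral>\<^sup>+\<omega>. frac_moment th t \<omega> \<partial>M) \<le> ennreal (Kr ^ t * C0)" for t
    using frac_moment_bound[OF th, of t] K C0
    by (simp add: C0_def ennreal_power ennreal_mult)
  have int: "integrable M (frac_moment th t)" for t
  proof (rule integrableI_nonneg)
    show "(\<integral>\<^sup>+\<omega>. frac_moment th t \<omega> \<partial>M) < \<infinity>" using nn_le[of t] by (simp add: order_le_less_trans)
  qed (use frac_moment_measurable frac_moment_nonneg in auto)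
  have "ennreal (expectation (frac_moment th t)) \<le> ennreal (Kr ^ t * C0)" for t
    using nn_le[of t] int[of t] frac_moment_nonneg
    by (subst nn_integral_eq_integral[symmetric]) auto
  then have exp_le: "expectation (frac_moment th t) \<le> Kr ^ t * C0" for t
    using K C0 by simp
  have "measure M (E t) \<le> C0 * (Kr / b) ^ t" for t
  proof -
    have "measure M (E t) \<le> expectation (frac_moment th t) / b ^ t"
      unfolding E_def
      by (rule integral_Markov_inequality_measure) (use int frac_moment_nonneg b in auto)
    also have "\<dots> \<le> Kr ^ t * C0 / b ^ t" using exp_le[of t] b by (simp add: divide_right_mono)
    also have "\<dots> = C0 * (Kr / b) ^ t" by (simp add: power_divide)
    finally show ?thesis .
  qed
  then have "summable (\<lambda>t. measure M (E t))"
    using K b by (intro summable_comparison_test'[OF summable_mult[OF summable_geometric]]) auto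
  then have "AE \<omega> in M. eventually (\<lambda>t. \<omega> \<in> space M - E t) sequentially"
    by (intro borel_cantelli_AE1[OF E_sets]) (simp_all add: less_top[symmetric])
  then show ?thesis
    by eventually_elim (auto elim!: eventually_mono simp: E_def)
qed

lemma infsum_pop_normalized:
  assumes "finite_range rA (\<lambda>i. A i \<omega>)" "0 < s"
  shows "infsum (\<lambda>x. \<bar>pop N0 A t \<omega> x / s ^ t\<bar>) UNIV
           = (\<Sum>x\<in>reach N0 rA t. \<bar>pop_fin N0 rA t (\<lambda>i. A i \<omega>) x\<bar>) / s ^ t"
proof -
  have "infsum (\<lambda>x. \<bar>pop N0 A t \<omega> x / s ^ t\<bar>) UNIV
      = infsum (\<lambda>x. \<bar>pop_fin N0 rA t (\<lambda>i. A i \<omega>) x / s ^ t\<bar>) (reach N0 rA t)"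
    unfolding pop_eq_pop_fin[of rA A \<omega> N0 t, OF assms(1) N0_fin N0_nonneg]
    by (rule infsum_cong_neutral) (use pop_fin_outside[OF assms(1) _ N0_nonneg] in auto)
  then show ?thesis using finite_reach[OF N0_fin] assms(2) by (simp add: sum_divide_distrib)
qed

lemma exponential_decay_of_moment_factor:
  fixes s th Kr :: real
  assumes th: "0 < th" "th \<le> 1" and s: "s > 0"
    and K: "moment_factor th = ennreal Kr" "0 \<le> Kr" "Kr < s powr th"
  shows "\<exists>c>0. AE \<omega> in M.
           (\<lambda>t. infsum (\<lambda>x. \<bar>pop N0 A t \<omega> x / s ^ t\<bar>) UNIV) \<in> O(\<lambda>t. exp (- c * real t))"
proof -
  define b where "b = (Kr + s powr th) / 2"
  have b: "Kr < b" "b < s powr th" using K by (auto simp: b_def)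
  define r where "r = b / s powr th"
  have r: "0 < r" "r < 1" using b K s by (auto simp: r_def)
  have br: "b = r * s powr th" using s by (simp add: r_def)
  define c where "c = - ln r / th"
  have c: "c > 0" using r th unfolding c_def by (intro divide_pos_pos) auto
  have "AE \<omega> in M. (\<lambda>t. infsum (\<lambda>x. \<bar>pop N0 A t \<omega> x / s ^ t\<bar>) UNIV) \<in> O(\<lambda>t. exp (- c * real t))"
    using AE_eventually_frac_moment_less[OF th K(1,2) b(1)] AE_finite_range
  proof eventually_elim
    case (elim \<omega>)
    have "eventually (\<lambda>t. norm (infsum (\<lambda>x. \<bar>pop N0 A t \<omega> x / s ^ t\<bar>) UNIV)
                          \<le> 1 * norm (exp (- c * real t))) at_top"
      using elim(1)
    proof eventually_elim
      case (elim t)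
      have "infsum (\<lambda>x. \<bar>pop N0 A t \<omega> x / s ^ t\<bar>) UNIV \<le> exp (- c * real t)"
        unfolding infsum_pop_normalized[OF \<open>finite_range rA (\<lambda>i. A i \<omega>)\<close> s] c_def
        by (rule sum_abs_div_power_le[OF finite_reach[OF N0_fin] th s r(1)])
           (use elim br in \<open>simp add: frac_moment_def\<close>)
      moreover have "0 \<le> infsum (\<lambda>x. \<bar>pop N0 A t \<omega> x / s ^ t\<bar>) UNIV" by (rule infsum_nonneg) simp
      ultimately show ?case by simp
    qed
    then show ?case by (rule bigoI)
  qed
  then show ?thesis using c by blast
qed

subsection \<open>Reduction of the entropy condition to finite sums\<close>

text \<open>Since A_1 is nonnegative a.s., its entries may be replaced by their absolute values.\<close>
lemma expectation_entry_abs: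
  assumes "f \<in> borel_measurable borel"
  shows "expectation (\<lambda>\<omega>. f (A 1 \<omega> 0 z)) = expectation (\<lambda>\<omega>. f \<bar>A 1 \<omega> 0 z\<bar>)"
  using nonneg[of 0 z] A_entry_measurable[of 1 0 z] assms
  by (intro integral_cong_AE) auto

text \<open>Since A_{1,0,z} vanishes for z outside range_ball, series of expectations of
  f (A_{1,0,z}) with f 0 = 0 are finite sums.\<close>
lemma infsum_expectation_entry:
  assumes "f \<in> borel_measurable borel" "f 0 = 0"
  shows "infsum (\<lambda>z. expectation (\<lambda>\<omega>. f (A 1 \<omega> 0 z))) UNIV
           = (\<Sum>z\<in>range_ball. expectation (\<lambda>\<omega>. f \<bar>A 1 \<omega> 0 z\<bar>))"
proof -
  have "expectation (\<lambda>\<omega>. f (A 1 \<omega> 0 z)) = 0" if "z \<notin> range_ball" for z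
    using AE_entry_zero[OF that] assms(2) by (intro integral_eq_zero_AE) auto
  then have "infsum (\<lambda>z. expectation (\<lambda>\<omega>. f (A 1 \<omega> 0 z))) UNIV
      = infsum (\<lambda>z. expectation (\<lambda>\<omega>. f (A 1 \<omega> 0 z))) range_ball"
    by (intro infsum_cong_neutral) auto
  then show ?thesis using finite_range_ball expectation_entry_abs[OF assms(1)] by simp
qed

lemma moment_factor_eq:
  assumes "0 < th" "th \<le> 1"
  shows "moment_factor th = ennreal (\<Sum>z\<in>range_ball. expectation (\<lambda>\<omega>. \<bar>A 1 \<omega> 0 z\<bar> powr th))"
proof -
  have "integrable M (\<lambda>\<omega>. \<bar>A 1 \<omega> 0 z\<bar> powr th)" for z
    using A_entry_measurable[of 1 0 z] square_int[of 0 z] assms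
    by (intro integrable_powr_of_sq) auto
  then show ?thesis
    unfolding moment_factor_def
    by (simp add: nn_integral_eq_integral sum_nonneg flip: sum_ennreal)
qed

text \<open>The means are nonnegative, so one nonzero mean makes their sum |a| positive.\<close>
lemma mean_total_pos:
  assumes "expectation (\<lambda>\<omega>. A 1 \<omega> 0 z) \<noteq> 0"
  shows "0 < infsum (\<lambda>z. expectation (\<lambda>\<omega>. A 1 \<omega> 0 z)) UNIV"
proof -
  have "expectation (\<lambda>\<omega>. A 1 \<omega> 0 z) = 0" if "z \<notin> range_ball"
    using AE_entry_zero[OF that] by (intro integral_eq_zero_AE) auto
  then have z: "z \<in> range_ball" using assms by blast
  have "0 < expectation (\<lambda>\<omega>. \<bar>A 1 \<omega> 0 z\<bar>)"
    using assms expectation_entry_abs[of "\<lambda>x. x" z] by (simp add: order_less_le)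
  then show ?thesis
    using infsum_expectation_entry[of "\<lambda>x. x"] finite_range_ball z
    by (simp add: sum_pos2)
qed

lemma exponential_decay_of_entropy:
  fixes s :: real
  assumes s: "s = infsum (\<lambda>z. expectation (\<lambda>\<omega>. A 1 \<omega> 0 z)) UNIV" "s > 0"
    and ent: "infsum (\<lambda>z. expectation (\<lambda>\<omega>. A 1 \<omega> 0 z * ln (A 1 \<omega> 0 z))) UNIV > s * ln s"
  shows "\<exists>c>0. AE \<omega> in M.
           (\<lambda>t. infsum (\<lambda>x. \<bar>pop N0 A t \<omega> x / s ^ t\<bar>) UNIV) \<in> O(\<lambda>t. exp (- c * real t))"
proof -
  define X where "X = (\<lambda>z \<omega>. \<bar>A 1 \<omega> 0 z\<bar>)"
  have X_meas: "X z \<in> borel_measurable M" for z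
    unfolding X_def using A_entry_measurable[of 1 0 z] by measurable
  have X_sq: "integrable M (\<lambda>\<omega>. (X z \<omega>)\<^sup>2)" for z
    unfolding X_def using square_int[of 0 z] by simp
  have s_sum: "s = (\<Sum>z\<in>range_ball. expectation (X z))"
    using s(1) infsum_expectation_entry[of "\<lambda>x. x"] by (simp add: X_def)
  have "(\<Sum>z\<in>range_ball. expectation (\<lambda>\<omega>. X z \<omega> * ln (X z \<omega>))) > s * ln s"
    using ent infsum_expectation_entry[of "\<lambda>x. x * ln x"] by (simp add: X_def)
  then obtain th where th: "0 < th" "th < 1"
      "(\<Sum>z\<in>range_ball. expectation (\<lambda>\<omega>. X z \<omega> powr th)) < s powr th"
    using exists_fractional_exponent[OF finite_range_ball X_meas X_sq _ s_sum s(2)]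
    by (auto simp: X_def)
  show ?thesis
    using exponential_decay_of_moment_factor[OF th(1) _ s(2) moment_factor_eq] th
    by (simp add: X_def sum_nonneg)
qed

end

theorem theorem3p1:
  fixes M :: "'w measure"
    and A :: "nat \<Rightarrow> 'w \<Rightarrow> int ^ 'd::finite \<Rightarrow> int ^ 'd \<Rightarrow> real"
    and N0 :: "int ^ 'd \<Rightarrow> real"
    and rA :: nat
  defines "a \<equiv> (\<lambda>y. prob_space.expectation M (\<lambda>\<omega>. A 1 \<omega> 0 y))"
  defines "asum \<equiv> infsum a UNIV"
  assumes "prob_space M"
    and iid_indep: "prob_space.indep_vars M (\<lambda>_. matM) A {1..}"
    and iid_distr: "\<And>t. t \<ge> 1 \<Longrightarrow> distr M matM (A t) = distr M matM (A 1)"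
    and nonneg: "\<And>x y. AE \<omega> in M. A 1 \<omega> x y \<ge> 0"
    and cols_indep: "prob_space.indep_vars M (\<lambda>_. colM) (\<lambda>y \<omega>. \<lambda>x. A 1 \<omega> x y) UNIV"
    and square_int: "\<And>x y. integrable M (\<lambda>\<omega>. (A 1 \<omega> x y)\<^sup>2)"
    and range: "\<And>x y. l1norm (x - y) > int rA \<Longrightarrow> (AE \<omega> in M. A 1 \<omega> x y = 0)"
    and shift: "\<And>z. distr M matM (\<lambda>\<omega>. \<lambda>x y. A 1 \<omega> (x + z) (y + z)) = distr M matM (A 1)"
    and basis: "\<exists>B \<subseteq> embR ` {x. infsum (\<lambda>y. a (x + y) * a y) UNIV \<noteq> 0}.
                  independent B \<and> span B = UNIV"
    and N0_nonneg: "\<And>x. N0 x \<ge> 0"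
    and N0_supp: "finite {x. N0 x > 0}" "{x. N0 x > 0} \<noteq> {}"
    and entropy: "infsum (\<lambda>y. prob_space.expectation M (\<lambda>\<omega>. A 1 \<omega> 0 y * ln (A 1 \<omega> 0 y))) UNIV
                    > asum * ln asum"
  shows "\<exists>c>0. AE \<omega> in M.
           (\<lambda>t. infsum (\<lambda>x. \<bar>pop N0 A t \<omega> x / asum ^ t\<bar>) UNIV) \<in> O(\<lambda>t. exp (- c * real t))"
proof -
  interpret lin_stoch_evolution M A N0 rA
    by (rule lin_stoch_evolution.intro[OF \<open>prob_space M\<close> lin_stoch_evolution_axioms.intro,
          OF iid_indep iid_distr nonneg square_int range shift N0_nonneg N0_supp(1)])
  text \<open>The basis condition excludes \<open>a = 0\<close>, since the empty set spans only \<open>{0}\<close>.\<close>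
  obtain x where x: "infsum (\<lambda>y. a (x + y) * a y) UNIV \<noteq> 0"
  proof -
    from basis obtain B where B: "B \<subseteq> embR ` {x. infsum (\<lambda>y. a (x + y) * a y) UNIV \<noteq> 0}"
      and "span B = UNIV" by blast
    moreover have "(1 :: real ^ 'd) \<notin> span {}" by (simp add: vec_eq_iff)
    ultimately have "B \<noteq> {}" by auto
    then show ?thesis using B that by blast
  qed
  have "\<exists>z. a z \<noteq> 0"
  proof (rule ccontr)
    assume "\<not> (\<exists>z. a z \<noteq> 0)"
    then have "(\<lambda>y. a (x + y) * a y) = (\<lambda>_. 0)" by auto
    then show False using x by simp
  qed
  then obtain z where "a z \<noteq> 0" by blast
  then have "asum > 0" unfolding asum_def a_def by (rule mean_total_pos)
  then show ?thesis
    using exponential_decay_of_entropy entropy unfolding asum_def a_def by blast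
qed

end
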